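(* Let $\theta_1^*,\dots,\theta_n^*\in\mathbb{R}^d$ lie in the Euclidean ball of radius $B$ centered at the origin, $\nu_n^*=\frac1n\sum_{i=1}^n\delta_{\theta_i^*}$, $\mathsf f_n=\varphi_\sigma\star\nu_n^*$ where $\varphi_\sigma$ is the $N(0,\sigma^2I_d)$ density, and let $Y_1,\dots,Y_n$ be i.i.d. with density $\mathsf f_n$. Let $\widehat{\mathsf f}_n$ be the Kiefer–Wolfowitz NPMLE and $\widehat\nu$ its (atomic) mixing measure. For $\bar h>0$ let $\mathcal E=\{d_H(\mathsf f_n,\widehat{\mathsf f}_n)\le\bar h\}$. Then, conditional on $\mathcal E$, for any $s\ge1$, $$\int_{\mathbb{R}^d}\|x\|_2^s\,d\widehat\nu(x)\le C_1(d,\sigma,s)(\log n)^{s/2}\,\bar h+C_2(d,s,\sigma,B)$$ with probability at least $1-1/\{n\,\mathbb{P}(\mathcal E)\}$, where $C_1,C_2>0$ depend only on the indicated quantities.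
   Context: The Kiefer–Wolfowitz NPMLE is a minimizer $\widehat{\mathsf f}_n$ of $-\sum_{i=1}^n\log\mathsf f(Y_i)$ over all densities $\mathsf f(y)=\int\varphi_\sigma(y-\theta)\,d\nu(\theta)$, $\nu$ a probability distribution on $\mathbb{R}^d$; its mixing measure $\widehat\nu$ satisfies $\widehat\nu\star\varphi_\sigma=\widehat{\mathsf f}_n$ and is atomic. $d_H(f,g)=\big(\int(\sqrt f-\sqrt g)^2\big)^{1/2}$ denotes the Hellinger distance between densities. *)

theory Defs
  imports "HOL-Probability.Probability"
begin

definition gauss_dens :: "real \<Rightarrow> 'a::euclidean_space \<Rightarrow> real" where
  "gauss_dens \<sigma> y =
     (2 * pi * \<sigma>\<^sup>2) powr (- real DIM('a) / 2) * exp (- (norm y)\<^sup>2 / (2 * \<sigma>\<^sup>2))"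

definition mix_dens :: "real \<Rightarrow> 'a::euclidean_space measure \<Rightarrow> 'a \<Rightarrow> real" where
  "mix_dens \<sigma> \<nu> y = (\<integral>\<theta>. gauss_dens \<sigma> (y - \<theta>) \<partial>\<nu>)"

definition emp_mix_dens :: "real \<Rightarrow> (nat \<Rightarrow> 'a::euclidean_space) \<Rightarrow> nat \<Rightarrow> 'a \<Rightarrow> real" where
  "emp_mix_dens \<sigma> \<theta> n y = (1 / real n) * (\<Sum>i<n. gauss_dens \<sigma> (y - \<theta> i))"

definition hellinger :: "('a::euclidean_space \<Rightarrow> real) \<Rightarrow> ('a \<Rightarrow> real) \<Rightarrow> real" where
  "hellinger f g = sqrt (\<integral>y. (sqrt (f y) - sqrt (g y))\<^sup>2 \<partial>lborel)"

definition mixing_measures :: "'a::euclidean_space measure set" where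
  "mixing_measures = {\<nu>. prob_space \<nu> \<and> sets \<nu> = sets borel}"

definition npmle_mixing :: "real \<Rightarrow> nat \<Rightarrow> (nat \<Rightarrow> 'a::euclidean_space) \<Rightarrow> 'a measure \<Rightarrow> bool" where
  "npmle_mixing \<sigma> n Y \<nu> \<longleftrightarrow> \<nu> \<in> mixing_measures \<and>
     (\<forall>\<mu>\<in>mixing_measures.
        - (\<Sum>i<n. ln (mix_dens \<sigma> \<nu> (Y i))) \<le> - (\<Sum>i<n. ln (mix_dens \<sigma> \<mu> (Y i))))"

definition sample_space :: "real \<Rightarrow> (nat \<Rightarrow> 'a::euclidean_space) \<Rightarrow> nat \<Rightarrow> (nat \<Rightarrow> 'a) measure" where
  "sample_space \<sigma> \<theta> n =
     PiM {..<n} (\<lambda>_. density lborel (\<lambda>y. ennreal (emp_mix_dens \<sigma> \<theta> n y)))"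

end

theory Submission
  imports Defs
begin

text \<open>
  A maximiser of the likelihood puts no mass outside the smallest centred ball containing the
  data: pushing that mass radially onto the sphere increases every likelihood term. So the
  \<open>s\<close>-th moment of \<open>\<nu>hat\<close> is at most \<open>M^s\<close>, \<open>M = max |Y_i|\<close>. On the other hand the moment of
  a mixing measure is at most twice the moment of its mixture density \<open>g\<close>, and inside the ball
  of radius \<open>2 M\<close> one has \<open>g \<le> 2 f_n + 2 (\<surd>f_n - \<surd>g)\<^sup>2\<close>, while outside it \<open>g\<close> is dominated
  by a Gaussian of doubled scale; this bounds the moment by \<open>C + c M^s h^2\<close>. The minimum of the
  two bounds is at most \<open>C + c' M^s h\<close>. Finally, outside an event of probability \<open>1/n\<close> every
  observation lies within \<open>2 \<sigma> \<surd>((d/2 + 2) log n)\<close> of the ball of radius \<open>B\<close>, which bounds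
  \<open>M^s\<close> by a multiple of \<open>B^s + (log n)^(s/2)\<close>; conditioning on \<open>E\<close> costs at most
  \<open>(1/n) / P(E)\<close>.
\<close>

section \<open>Gaussian densities\<close>

lemma gauss_dens_nonneg [simp]: "0 \<le> gauss_dens \<sigma> y"
  by (simp add: gauss_dens_def)

lemma gauss_dens_pos: "\<sigma> \<noteq> 0 \<Longrightarrow> 0 < gauss_dens \<sigma> y"
  by (simp add: gauss_dens_def)

lemma borel_measurable_gauss_dens [measurable]: "gauss_dens \<sigma> \<in> borel_measurable borel"
  unfolding gauss_dens_def by measurable

lemma gauss_dens_uminus [simp]: "gauss_dens \<sigma> (- y) = gauss_dens \<sigma> y"
  by (simp add: gauss_dens_def)

lemma gauss_dens_le_max:
  "gauss_dens \<sigma> (y::'a::euclidean_space) \<le> (2 * pi * \<sigma>\<^sup>2) powr (- real DIM('a) / 2)"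
  unfolding gauss_dens_def by (simp add: mult_left_le)

lemma gauss_dens_antimono:
  fixes a b :: "'a::euclidean_space"
  assumes "norm a \<le> norm b"
  shows "gauss_dens \<sigma> b \<le> gauss_dens \<sigma> a"
proof -
  have "(norm a)\<^sup>2 / (2 * \<sigma>\<^sup>2) \<le> (norm b)\<^sup>2 / (2 * \<sigma>\<^sup>2)"
    using assms by (intro divide_right_mono power_mono) auto
  then show ?thesis
    unfolding gauss_dens_def by (intro mult_left_mono) auto
qed

lemma gauss_dens_strict_antimono:
  fixes a b :: "'a::euclidean_space"
  assumes "\<sigma> \<noteq> 0" and "norm a < norm b"
  shows "gauss_dens \<sigma> b < gauss_dens \<sigma> a"
  unfolding gauss_dens_def using assms by (simp add: divide_strict_right_mono power_strict_mono)

lemma powr_neg_half_eq_power_inverse_sqrt: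
  fixes a :: real
  assumes "a > 0"
  shows "a powr (- real d / 2) = (1 / sqrt a) ^ d"
proof -
  have "(1 / sqrt a) ^ d = (a powr (-1/2)) ^ d"
    using assms by (simp add: powr_minus_divide powr_half_sqrt)
  also have "\<dots> = a powr (-1/2 * real d)"
    using assms by (simp add: powr_realpow[symmetric] powr_powr)
  finally show ?thesis
    by simp
qed

lemma gauss_dens_eq_prod_normal_density:
  fixes y :: "'a::euclidean_space"
  assumes "\<sigma> > 0"
  shows "gauss_dens \<sigma> y = (\<Prod>b\<in>Basis. normal_density 0 \<sigma> (y \<bullet> b))"
proof -
  have "(norm y)\<^sup>2 = (\<Sum>b\<in>Basis. (y \<bullet> b) * (y \<bullet> b))"
    unfolding power2_norm_eq_inner by (rule euclidean_inner)
  then have exp_prod: "exp (- (norm y)\<^sup>2 / (2 * \<sigma>\<^sup>2)) = (\<Prod>b\<in>Basis. exp (- (y \<bullet> b)\<^sup>2 / (2 * \<sigma>\<^sup>2)))"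
    by (simp add: power2_eq_square exp_sum[symmetric] sum_divide_distrib sum_negf)
  have const: "(2 * pi * \<sigma>\<^sup>2) powr (- real DIM('a) / 2) = (1 / sqrt (2 * pi * \<sigma>\<^sup>2)) ^ DIM('a)"
    using assms by (intro powr_neg_half_eq_power_inverse_sqrt) simp
  have "(\<Prod>b\<in>Basis. normal_density 0 \<sigma> (y \<bullet> b)) =
      (\<Prod>b\<in>(Basis::'a set). 1 / sqrt (2 * pi * \<sigma>\<^sup>2)) * (\<Prod>b\<in>Basis. exp (- (y \<bullet> b)\<^sup>2 / (2 * \<sigma>\<^sup>2)))"
    by (simp only: normal_density_def diff_zero prod.distrib)
  then show ?thesis
    unfolding gauss_dens_def const exp_prod prod_constant by simp
qed

lemma nn_integral_gauss_dens:
  assumes "\<sigma> > 0"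
  shows "(\<integral>\<^sup>+y. ennreal (gauss_dens \<sigma> (y::'a::euclidean_space)) \<partial>lborel) = 1"
proof -
  have "(\<integral>\<^sup>+y. ennreal (gauss_dens \<sigma> (y::'a)) \<partial>lborel) =
     (\<integral>\<^sup>+y. (\<Prod>b\<in>Basis. ennreal (normal_density 0 \<sigma> ((y::'a) \<bullet> b))) \<partial>lborel)"
    by (intro nn_integral_cong)
       (simp add: gauss_dens_eq_prod_normal_density[OF assms] prod_ennreal normal_density_nonneg)
  also have "\<dots> = (\<Prod>b\<in>(Basis::'a set). (\<integral>\<^sup>+x. ennreal (normal_density 0 \<sigma> x) \<partial>lborel))"
    by (rule nn_integral_lborel_prod) auto
  also have "\<dots> = 1"
    using assms by (subst nn_integral_eq_integral) (auto simp: normal_density_nonneg)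
  finally show ?thesis .
qed

lemma nn_integral_lborel_translate:
  fixes f :: "'a::euclidean_space \<Rightarrow> ennreal"
  assumes [measurable]: "f \<in> borel_measurable borel"
  shows "(\<integral>\<^sup>+y. f (y - x) \<partial>lborel) = (\<integral>\<^sup>+y. f y \<partial>lborel)"
proof -
  have "(\<integral>\<^sup>+y. f y \<partial>lborel) = (\<integral>\<^sup>+y. f y \<partial>distr lborel borel ((+) (- x)))"
    by (simp add: lborel_distr_plus)
  then show ?thesis
    by (simp add: nn_integral_distr)
qed

lemma nn_integral_lborel_reflect:
  fixes f :: "'a::euclidean_space \<Rightarrow> ennreal"
  assumes [measurable]: "f \<in> borel_measurable borel"
  shows "(\<integral>\<^sup>+y. f (x - y) \<partial>lborel) = (\<integral>\<^sup>+y. f y \<partial>lborel)"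
proof -
  have "(\<integral>\<^sup>+y. f y \<partial>lborel) =
      (\<integral>\<^sup>+y. f y \<partial>density (distr lborel borel (\<lambda>y. x + (-1) *\<^sub>R y)) (\<lambda>_. \<bar>-1::real\<bar> ^ DIM('a)))"
    using lborel_affine[of "-1::real" x] by simp
  then show ?thesis
    by (simp add: nn_integral_density nn_integral_distr)
qed

text \<open>All moment and tail bounds on \<open>gauss_dens\<close> go through this identity, which trades half
  of the Gaussian decay for a weight.\<close>
lemma gauss_dens_eq_exp_mult_gauss_dens:
  fixes y :: "'a::euclidean_space"
  shows "gauss_dens \<sigma> y =
    2 powr (real DIM('a) / 2) * exp (- (norm y)\<^sup>2 / (4 * \<sigma>\<^sup>2)) * gauss_dens (sqrt 2 * \<sigma>) y"
proof -
  have "2 * pi * (sqrt 2 * \<sigma>)\<^sup>2 = 2 * (2 * pi * \<sigma>\<^sup>2)"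
    by (simp add: power_mult_distrib)
  then have const: "(2 * pi * (sqrt 2 * \<sigma>)\<^sup>2) powr (- real DIM('a) / 2)
      = 2 powr (- real DIM('a) / 2) * (2 * pi * \<sigma>\<^sup>2) powr (- real DIM('a) / 2)"
    by (simp only: powr_mult)
  have exp_split: "exp (- (norm y)\<^sup>2 / (2 * \<sigma>\<^sup>2))
      = exp (- (norm y)\<^sup>2 / (4 * \<sigma>\<^sup>2)) * exp (- (norm y)\<^sup>2 / (2 * (sqrt 2 * \<sigma>)\<^sup>2))"
    by (simp add: exp_add[symmetric] power_mult_distrib add_divide_distrib[symmetric])
  have cancel: "2 powr (real DIM('a) / 2) * 2 powr (- real DIM('a) / 2) = (1::real)"
    by (simp add: powr_add[symmetric])
  have rearrange: "a * e * (b * c * f) = (a * b) * (c * (e * f))" for a b c e f :: real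
    by (simp only: mult_ac)
  show ?thesis
    unfolding gauss_dens_def const rearrange cancel exp_split by simp
qed

lemma gauss_dens_scaleR_half:
  fixes y :: "'a::euclidean_space"
  shows "gauss_dens \<sigma> ((1/2) *\<^sub>R y) = 2 powr real DIM('a) * gauss_dens (2 * \<sigma>) y"
proof -
  have "2 * pi * (2 * \<sigma>)\<^sup>2 = 2 powr 2 * (2 * pi * \<sigma>\<^sup>2)"
    by (simp add: power_mult_distrib)
  then have "(2 * pi * (2 * \<sigma>)\<^sup>2) powr (- real DIM('a) / 2)
      = (2 powr 2) powr (- real DIM('a) / 2) * (2 * pi * \<sigma>\<^sup>2) powr (- real DIM('a) / 2)"
    by (simp only: powr_mult)
  also have "(2 powr 2) powr (- real DIM('a) / 2) = 2 powr (- real DIM('a))"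
    by (simp only: powr_powr) simp
  finally have const: "(2 * pi * (2 * \<sigma>)\<^sup>2) powr (- real DIM('a) / 2)
      = 2 powr (- real DIM('a)) * (2 * pi * \<sigma>\<^sup>2) powr (- real DIM('a) / 2)" .
  have arg: "- (norm ((1/2) *\<^sub>R y))\<^sup>2 / (2 * \<sigma>\<^sup>2) = - (norm y)\<^sup>2 / (2 * (2 * \<sigma>)\<^sup>2)"
    by (simp add: power2_eq_square field_simps)
  have cancel: "2 powr real DIM('a) * 2 powr (- real DIM('a)) = (1::real)"
    by (simp add: powr_add[symmetric])
  show ?thesis
    unfolding gauss_dens_def const by (simp only: arg mult.assoc[symmetric] cancel mult_1)
qed

lemma powr_le_one_add_power:
  fixes t p :: real
  assumes "0 \<le> t" and "0 \<le> p" and "p \<le> real k"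
  shows "t powr p \<le> 1 + t ^ k"
proof (cases "t \<le> 1")
  case True
  then have "t powr p \<le> 1 powr p"
    using assms(1,2) by (intro powr_mono2) auto
  then show ?thesis
    using assms(1) by (simp add: add_increasing2)
next
  case False
  then have "t powr p \<le> t powr real k"
    using assms(3) by (intro powr_mono) auto
  also have "\<dots> = t ^ k"
    using False by (intro powr_realpow) auto
  finally show ?thesis
    by simp
qed

lemma power_le_exp:
  fixes x :: real
  assumes "0 \<le> x" and "m \<ge> 1"
  shows "x ^ m \<le> real m ^ m * exp x"
proof -
  have "(x / m) ^ m \<le> exp (x / m) ^ m"
  proof (rule power_mono)
    show "x / m \<le> exp (x / m)"
      using exp_ge_add_one_self[of "x / m"] by linarith
  qed (use assms(1) in simp)
  also have "\<dots> = exp x"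
    using assms(2) by (simp add: exp_of_nat_mult[symmetric])
  finally show ?thesis
    using assms(2) by (simp add: power_divide field_simps)
qed

lemma powr_mult_exp_neg_square_bounded:
  fixes a p :: real
  assumes "a > 0" and "p \<ge> 0"
  shows "\<exists>K. \<forall>t\<ge>0. t powr p * exp (- t\<^sup>2 / a) \<le> K"
proof -
  define m where "m = nat \<lceil>p\<rceil> + 1"
  have "m \<ge> 1" and "p \<le> real (2 * m)"
    using assms(2) by (auto simp: m_def) linarith
  have "t powr p * exp (- t\<^sup>2 / a) \<le> 1 + (a * m) ^ m" if "t \<ge> 0" for t
  proof -
    have "0 \<le> t\<^sup>2 / a"
      using assms(1) by (intro divide_nonneg_pos) auto
    have "t powr p \<le> 1 + (a * (t\<^sup>2 / a)) ^ m"
      using powr_le_one_add_power[OF that assms(2) \<open>p \<le> real (2 * m)\<close>] assms(1)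
      by (simp add: power_mult)
    also have "\<dots> = 1 + a ^ m * (t\<^sup>2 / a) ^ m"
      by (simp only: power_mult_distrib)
    also have "\<dots> \<le> 1 + a ^ m * (real m ^ m * exp (t\<^sup>2 / a))"
      using assms(1) power_le_exp[OF \<open>0 \<le> t\<^sup>2 / a\<close> \<open>m \<ge> 1\<close>] by (simp add: mult_left_mono)
    also have "\<dots> = (a * m) ^ m * exp (t\<^sup>2 / a) + 1"
      by (simp add: power_mult_distrib)
    also have "\<dots> \<le> (1 + (a * m) ^ m) * exp (t\<^sup>2 / a)"
      using \<open>0 \<le> t\<^sup>2 / a\<close> by (simp add: distrib_right)
    finally show ?thesis
      using assms(1) by (simp add: exp_minus divide_simps)
  qed
  then show ?thesis
    by blast
qed

lemma nn_integral_gauss_dens_weight_le: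
  fixes g :: "'a::euclidean_space \<Rightarrow> real"
  assumes "\<sigma> > 0" and "\<And>y. 0 \<le> g y" and "\<And>y. g y * exp (- (norm y)\<^sup>2 / (4 * \<sigma>\<^sup>2)) \<le> K"
  shows "(\<integral>\<^sup>+y. ennreal (g y * gauss_dens \<sigma> y) \<partial>lborel) \<le> ennreal (2 powr (real DIM('a) / 2) * K)"
proof -
  define c :: real where "c = 2 powr (real DIM('a) / 2) * K"
  have "ennreal (g y * gauss_dens \<sigma> y) \<le> ennreal c * ennreal (gauss_dens (sqrt 2 * \<sigma>) y)" for y
  proof -
    have "g y * gauss_dens \<sigma> y
        = 2 powr (real DIM('a) / 2) * (g y * exp (- (norm y)\<^sup>2 / (4 * \<sigma>\<^sup>2))) * gauss_dens (sqrt 2 * \<sigma>) y"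
      by (subst gauss_dens_eq_exp_mult_gauss_dens) (simp only: mult_ac)
    also have "\<dots> \<le> c * gauss_dens (sqrt 2 * \<sigma>) y"
      unfolding c_def using assms(3) by (intro mult_right_mono mult_left_mono) auto
    finally show ?thesis
      by (simp add: ennreal_mult''[symmetric] ennreal_leI)
  qed
  then have "(\<integral>\<^sup>+y. ennreal (g y * gauss_dens \<sigma> y) \<partial>lborel)
      \<le> (\<integral>\<^sup>+y. ennreal c * ennreal (gauss_dens (sqrt 2 * \<sigma>) (y::'a)) \<partial>lborel)"
    by (rule nn_integral_mono)
  also have "\<dots> = ennreal c"
    using assms(1) by (simp add: nn_integral_cmult nn_integral_gauss_dens)
  finally show ?thesis
    unfolding c_def .
qed

lemma nn_integral_gauss_dens_moment_finite:
  assumes "\<sigma> > 0" and "p \<ge> 0"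
  shows "(\<integral>\<^sup>+y. ennreal (norm y powr p * gauss_dens \<sigma> (y::'a::euclidean_space)) \<partial>lborel) < \<infinity>"
proof -
  obtain K where "\<And>t. t \<ge> 0 \<Longrightarrow> t powr p * exp (- t\<^sup>2 / (4 * \<sigma>\<^sup>2)) \<le> K"
    using powr_mult_exp_neg_square_bounded[of "4 * \<sigma>\<^sup>2" p] assms by auto
  then have "(\<integral>\<^sup>+y. ennreal (norm y powr p * gauss_dens \<sigma> (y::'a)) \<partial>lborel)
      \<le> ennreal (2 powr (real DIM('a) / 2) * K)"
    using assms(1) by (intro nn_integral_gauss_dens_weight_le) auto
  then show ?thesis
    by (rule le_less_trans) simp
qed

lemma nn_integral_gauss_dens_tail:
  assumes "\<sigma> > 0" and "u \<ge> 0"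
  shows "(\<integral>\<^sup>+y. ennreal (indicator {y. u \<le> norm y} y * gauss_dens \<sigma> (y::'a::euclidean_space)) \<partial>lborel)
    \<le> ennreal (2 powr (real DIM('a) / 2) * exp (- u\<^sup>2 / (4 * \<sigma>\<^sup>2)))"
proof (rule nn_integral_gauss_dens_weight_le[OF assms(1)])
  fix y :: 'a
  show "indicator {y. u \<le> norm y} y * exp (- (norm y)\<^sup>2 / (4 * \<sigma>\<^sup>2)) \<le> exp (- u\<^sup>2 / (4 * \<sigma>\<^sup>2))"
  proof (cases "u \<le> norm y")
    case True
    then have "u\<^sup>2 / (4 * \<sigma>\<^sup>2) \<le> (norm y)\<^sup>2 / (4 * \<sigma>\<^sup>2)"
      using assms(2) by (intro divide_right_mono power_mono) auto
    then show ?thesis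
      using True by simp
  qed simp
qed simp

lemma powr_add_le_two_powr:
  fixes a b p :: real
  assumes "0 \<le> a" and "0 \<le> b" and "0 \<le> p"
  shows "(a + b) powr p \<le> 2 powr p * (a powr p + b powr p)"
proof -
  have "(a + b) powr p \<le> (2 * max a b) powr p"
    using assms by (intro powr_mono2) auto
  also have "\<dots> = 2 powr p * max a b powr p"
    using assms by (simp add: powr_mult)
  also have "\<dots> \<le> 2 powr p * (a powr p + b powr p)"
    by (intro mult_left_mono) (auto simp: max_def)
  finally show ?thesis .
qed

text \<open>Average the substitutions \<open>y = z + x\<close> and \<open>y = x - z\<close>: as \<open>2 |x| \<le> |z + x| + |x - z|\<close>,
  one of the two integrands dominates \<open>|x|^p\<close> pointwise.\<close>
lemma norm_powr_le_nn_integral_shifted_gauss_dens: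
  fixes x :: "'a::euclidean_space"
  assumes "\<sigma> > 0" and "p \<ge> 0"
  shows "ennreal (norm x powr p) \<le> 2 * (\<integral>\<^sup>+y. ennreal (norm y powr p * gauss_dens \<sigma> (y - x)) \<partial>lborel)"
proof -
  define I where "I = (\<integral>\<^sup>+y. ennreal (norm y powr p * gauss_dens \<sigma> (y - x)) \<partial>lborel)"
  have I_plus: "I = (\<integral>\<^sup>+z. ennreal (norm (z + x) powr p * gauss_dens \<sigma> z) \<partial>lborel)"
    unfolding I_def
    using nn_integral_lborel_translate[of "\<lambda>z. ennreal (norm (z + x) powr p * gauss_dens \<sigma> z)" x]
    by simp
  have I_minus: "I = (\<integral>\<^sup>+z. ennreal (norm (x - z) powr p * gauss_dens \<sigma> z) \<partial>lborel)"
    unfolding I_def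
    using nn_integral_lborel_reflect[of "\<lambda>y. ennreal (norm y powr p * gauss_dens \<sigma> (y - x))" x]
    by simp
  have pointwise: "ennreal (norm x powr p) * ennreal (gauss_dens \<sigma> z)
      \<le> ennreal (norm (z + x) powr p * gauss_dens \<sigma> z) + ennreal (norm (x - z) powr p * gauss_dens \<sigma> z)"
    for z :: 'a
  proof -
    have "norm (x + x) = 2 * norm x"
      by (metis norm_scaleR real_norm_def scaleR_2 abs_of_nonneg zero_le_numeral)
    then have "2 * norm x \<le> norm (z + x) + norm (x - z)"
      using norm_triangle_ineq[of "z + x" "x - z"] by simp
    then have "norm x powr p \<le> max (norm (z + x)) (norm (x - z)) powr p"
      using assms(2) by (intro powr_mono2) auto
    also have "\<dots> \<le> norm (z + x) powr p + norm (x - z) powr p"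
      by (auto simp: max_def)
    finally have "norm x powr p * gauss_dens \<sigma> z
        \<le> norm (z + x) powr p * gauss_dens \<sigma> z + norm (x - z) powr p * gauss_dens \<sigma> z"
      by (simp add: distrib_right[symmetric] mult_right_mono)
    then show ?thesis
      by (simp add: ennreal_mult''[symmetric] ennreal_plus[symmetric] del: ennreal_plus)
  qed
  have "ennreal (norm x powr p) = (\<integral>\<^sup>+z. ennreal (norm x powr p) * ennreal (gauss_dens \<sigma> (z::'a)) \<partial>lborel)"
    using assms(1) by (simp add: nn_integral_cmult nn_integral_gauss_dens)
  also have "\<dots> \<le> (\<integral>\<^sup>+z. ennreal (norm (z + x) powr p * gauss_dens \<sigma> z)
      + ennreal (norm (x - z) powr p * gauss_dens \<sigma> z) \<partial>lborel)"
    by (intro nn_integral_mono pointwise)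
  also have "\<dots> = 2 * I"
    by (subst nn_integral_add) (auto simp: I_plus[symmetric] I_minus[symmetric] mult_2)
  finally show ?thesis
    unfolding I_def .
qed

section \<open>Gaussian location mixtures\<close>

lemma mixing_measuresD:
  assumes "\<nu> \<in> mixing_measures"
  shows "prob_space \<nu>" and "sets \<nu> = sets borel"
  using assms by (auto simp: mixing_measures_def)

lemma borel_measurable_mixing:
  assumes "\<nu> \<in> mixing_measures" and "f \<in> borel_measurable borel"
  shows "f \<in> borel_measurable \<nu>"
  using assms(2) unfolding measurable_cong_sets[OF mixing_measuresD(2)[OF assms(1)] refl] .

lemma borel_measurable_pair_mixing:
  fixes \<nu> :: "'a::euclidean_space measure"
  assumes "\<nu> \<in> mixing_measures" and "f \<in> borel_measurable (borel \<Otimes>\<^sub>M (borel :: 'a measure))"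
  shows "f \<in> borel_measurable (lborel \<Otimes>\<^sub>M \<nu>)"
proof -
  have sets_eq: "sets (lborel \<Otimes>\<^sub>M \<nu>) = sets (borel \<Otimes>\<^sub>M (borel :: 'a measure))"
    using mixing_measuresD(2)[OF assms(1)] by (intro sets_pair_measure_cong) auto
  show ?thesis
    using assms(2) unfolding measurable_cong_sets[OF sets_eq refl] .
qed

lemma integrable_mixing_gauss_dens:
  fixes \<nu> :: "'a::euclidean_space measure"
  assumes "\<nu> \<in> mixing_measures"
  shows "integrable \<nu> (\<lambda>\<theta>. gauss_dens \<sigma> (y - \<theta>))"
proof -
  interpret prob_space \<nu>
    using mixing_measuresD(1)[OF assms] .
  show ?thesis
  proof (rule integrable_const_bound[where B = "(2 * pi * \<sigma>\<^sup>2) powr (- real DIM('a) / 2)"])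
    show "AE \<theta> in \<nu>. norm (gauss_dens \<sigma> (y - \<theta>)) \<le> (2 * pi * \<sigma>\<^sup>2) powr (- real DIM('a) / 2)"
      using gauss_dens_le_max[of \<sigma>] by (intro AE_I2) auto
    show "(\<lambda>\<theta>. gauss_dens \<sigma> (y - \<theta>)) \<in> borel_measurable \<nu>"
      by (rule borel_measurable_mixing[OF assms]) measurable
  qed
qed

lemma mix_dens_nonneg [simp]: "0 \<le> mix_dens \<sigma> \<nu> y"
  unfolding mix_dens_def by (simp add: integral_nonneg_AE)

lemma mix_dens_pos:
  fixes \<nu> :: "'a::euclidean_space measure"
  assumes "\<sigma> \<noteq> 0" and "\<nu> \<in> mixing_measures"
  shows "0 < mix_dens \<sigma> \<nu> y"
proof -
  interpret prob_space \<nu>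
    using mixing_measuresD(1)[OF assms(2)] .
  have "integral\<^sup>L \<nu> (\<lambda>\<theta>. 0) < integral\<^sup>L \<nu> (\<lambda>\<theta>. gauss_dens \<sigma> (y - \<theta>))"
    using assms by (intro integral_less_AE_space)
      (auto simp: integrable_mixing_gauss_dens gauss_dens_pos emeasure_space_1)
  then show ?thesis
    by (simp add: mix_dens_def)
qed

lemma ennreal_mix_dens:
  fixes \<nu> :: "'a::euclidean_space measure"
  assumes "\<nu> \<in> mixing_measures"
  shows "ennreal (mix_dens \<sigma> \<nu> y) = (\<integral>\<^sup>+\<theta>. ennreal (gauss_dens \<sigma> (y - \<theta>)) \<partial>\<nu>)"
  unfolding mix_dens_def
  using assms by (subst nn_integral_eq_integral) (auto simp: integrable_mixing_gauss_dens)

lemma borel_measurable_mix_dens: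
  fixes \<nu> :: "'a::euclidean_space measure"
  assumes "\<nu> \<in> mixing_measures"
  shows "mix_dens \<sigma> \<nu> \<in> borel_measurable borel"
proof -
  interpret prob_space \<nu>
    using mixing_measuresD(1)[OF assms] .
  have "(\<lambda>(y, \<theta>). gauss_dens \<sigma> (y - \<theta>)) \<in> borel_measurable (lborel \<Otimes>\<^sub>M \<nu>)"
    by (rule borel_measurable_pair_mixing[OF assms]) measurable
  then have "mix_dens \<sigma> \<nu> \<in> borel_measurable lborel"
    unfolding mix_dens_def by (intro borel_measurable_lebesgue_integral) simp
  then show ?thesis
    by simp
qed

lemma nn_integral_mix_dens:
  fixes \<nu> :: "'a::euclidean_space measure"
  assumes "\<sigma> > 0" and "\<nu> \<in> mixing_measures"
  shows "(\<integral>\<^sup>+y. ennreal (mix_dens \<sigma> \<nu> y) \<partial>lborel) = 1"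
proof -
  interpret N: prob_space \<nu>
    using mixing_measuresD(1)[OF assms(2)] .
  interpret pair_sigma_finite lborel \<nu> ..
  have [measurable]: "(\<lambda>(y, \<theta>). ennreal (gauss_dens \<sigma> (y - \<theta>))) \<in> borel_measurable (lborel \<Otimes>\<^sub>M \<nu>)"
    by (rule borel_measurable_pair_mixing[OF assms(2)]) measurable
  have "(\<integral>\<^sup>+y. ennreal (mix_dens \<sigma> \<nu> y) \<partial>lborel)
      = (\<integral>\<^sup>+y. (\<integral>\<^sup>+\<theta>. ennreal (gauss_dens \<sigma> (y - \<theta>)) \<partial>\<nu>) \<partial>lborel)"
    using assms(2) by (simp add: ennreal_mix_dens)
  also have "\<dots> = (\<integral>\<^sup>+\<theta>. (\<integral>\<^sup>+y. ennreal (gauss_dens \<sigma> (y - \<theta>)) \<partial>lborel) \<partial>\<nu>)"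
    by (rule Fubini'[symmetric]) simp
  also have "\<dots> = (\<integral>\<^sup>+\<theta>. 1 \<partial>\<nu>)"
    using assms(1)
    by (intro nn_integral_cong)
      (simp add: nn_integral_lborel_translate[where f = "\<lambda>z. ennreal (gauss_dens \<sigma> z)"] nn_integral_gauss_dens)
  finally show ?thesis
    by (simp add: N.emeasure_space_1)
qed

lemma integrable_mix_dens:
  fixes \<nu> :: "'a::euclidean_space measure"
  assumes "\<sigma> > 0" and "\<nu> \<in> mixing_measures"
  shows "integrable lborel (mix_dens \<sigma> \<nu>)"
  using assms borel_measurable_mix_dens[OF assms(2)]
  by (intro integrableI_nonneg) (auto simp: nn_integral_mix_dens)

lemma mix_dens_le_far:
  fixes \<nu> :: "'a::euclidean_space measure"
  assumes "\<nu> \<in> mixing_measures" and "AE \<theta> in \<nu>. norm \<theta> \<le> M" and "2 * M \<le> norm y"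
  shows "mix_dens \<sigma> \<nu> y \<le> 2 powr real DIM('a) * gauss_dens (2 * \<sigma>) y"
proof -
  interpret prob_space \<nu>
    using mixing_measuresD(1)[OF assms(1)] .
  have "mix_dens \<sigma> \<nu> y \<le> integral\<^sup>L \<nu> (\<lambda>\<theta>. 2 powr real DIM('a) * gauss_dens (2 * \<sigma>) y)"
    unfolding mix_dens_def
  proof (rule integral_mono_AE[OF integrable_mixing_gauss_dens[OF assms(1)]])
    show "AE \<theta> in \<nu>. gauss_dens \<sigma> (y - \<theta>) \<le> 2 powr real DIM('a) * gauss_dens (2 * \<sigma>) y"
      using assms(2)
    proof eventually_elim
      case (elim \<theta>)
      have "norm ((1/2) *\<^sub>R y) \<le> norm (y - \<theta>)"
        using norm_triangle_ineq2[of y \<theta>] elim assms(3) by simp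
      then have "gauss_dens \<sigma> (y - \<theta>) \<le> gauss_dens \<sigma> ((1/2) *\<^sub>R y)"
        by (rule gauss_dens_antimono)
      then show ?case
        by (simp add: gauss_dens_scaleR_half)
    qed
  qed simp
  then show ?thesis
    by (simp add: prob_space)
qed

lemma nn_integral_mixing_moment_le:
  fixes \<nu> :: "'a::euclidean_space measure"
  assumes "\<sigma> > 0" and "\<nu> \<in> mixing_measures" and "p \<ge> 0"
  shows "(\<integral>\<^sup>+\<theta>. ennreal (norm \<theta> powr p) \<partial>\<nu>)
    \<le> 2 * (\<integral>\<^sup>+y. ennreal (norm y powr p * mix_dens \<sigma> \<nu> y) \<partial>lborel)"
proof -
  interpret N: prob_space \<nu>
    using mixing_measuresD(1)[OF assms(2)] .
  interpret pair_sigma_finite lborel \<nu> ..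
  have [measurable]: "(\<lambda>(y, \<theta>). ennreal (norm y powr p * gauss_dens \<sigma> (y - \<theta>))) \<in> borel_measurable (lborel \<Otimes>\<^sub>M \<nu>)"
    by (rule borel_measurable_pair_mixing[OF assms(2)]) measurable
  have "(\<integral>\<^sup>+\<theta>. ennreal (norm \<theta> powr p) \<partial>\<nu>)
      \<le> (\<integral>\<^sup>+\<theta>. 2 * (\<integral>\<^sup>+y. ennreal (norm y powr p * gauss_dens \<sigma> (y - \<theta>)) \<partial>lborel) \<partial>\<nu>)"
    using assms by (intro nn_integral_mono norm_powr_le_nn_integral_shifted_gauss_dens)
  also have "\<dots> = 2 * (\<integral>\<^sup>+\<theta>. (\<integral>\<^sup>+y. ennreal (norm y powr p * gauss_dens \<sigma> (y - \<theta>)) \<partial>lborel) \<partial>\<nu>)"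
    by (rule nn_integral_cmult) simp
  also have "(\<integral>\<^sup>+\<theta>. (\<integral>\<^sup>+y. ennreal (norm y powr p * gauss_dens \<sigma> (y - \<theta>)) \<partial>lborel) \<partial>\<nu>)
      = (\<integral>\<^sup>+y. (\<integral>\<^sup>+\<theta>. ennreal (norm y powr p * gauss_dens \<sigma> (y - \<theta>)) \<partial>\<nu>) \<partial>lborel)"
    by (rule Fubini') simp
  also have "\<dots> = (\<integral>\<^sup>+y. ennreal (norm y powr p * mix_dens \<sigma> \<nu> y) \<partial>lborel)"
  proof (intro nn_integral_cong)
    fix y :: 'a
    have "(\<integral>\<^sup>+\<theta>. ennreal (norm y powr p * gauss_dens \<sigma> (y - \<theta>)) \<partial>\<nu>)
        = (\<integral>\<^sup>+\<theta>. ennreal (norm y powr p) * ennreal (gauss_dens \<sigma> (y - \<theta>)) \<partial>\<nu>)"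
      by (simp add: ennreal_mult)
    also have "\<dots> = ennreal (norm y powr p) * (\<integral>\<^sup>+\<theta>. ennreal (gauss_dens \<sigma> (y - \<theta>)) \<partial>\<nu>)"
      by (rule nn_integral_cmult) (rule borel_measurable_mixing[OF assms(2)], measurable)
    also have "\<dots> = ennreal (norm y powr p * mix_dens \<sigma> \<nu> y)"
      using assms(2) by (simp add: ennreal_mix_dens ennreal_mult)
    finally show "(\<integral>\<^sup>+\<theta>. ennreal (norm y powr p * gauss_dens \<sigma> (y - \<theta>)) \<partial>\<nu>)
        = ennreal (norm y powr p * mix_dens \<sigma> \<nu> y)" .
  qed
  finally show ?thesis .
qed

section \<open>The support of the NPMLE\<close>

definition radial_proj :: "real \<Rightarrow> 'a::real_normed_vector \<Rightarrow> 'a" where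
  "radial_proj M x = (if norm x \<le> M then x else (M / norm x) *\<^sub>R x)"

lemma borel_measurable_radial_proj [measurable]:
  "radial_proj M \<in> borel_measurable (borel :: 'a::euclidean_space measure)"
  unfolding radial_proj_def by measurable

lemma norm_diff_radial_proj_less:
  fixes x y :: "'a::real_inner"
  assumes "norm y \<le> M" and "M < norm x"
  shows "norm (y - radial_proj M x) < norm (y - x)"
proof -
  define r where "r = norm x"
  define c where "c = M / r"
  define t where "t = y \<bullet> x"
  have M0: "0 \<le> M"
    using assms(1) norm_ge_zero[of y] by linarith
  have r0: "r > 0"
    unfolding r_def using assms(2) M0 by linarith
  have cr: "c * r = M" and c1: "c < 1"
    using r0 assms(2) by (simp_all add: c_def r_def)
  have "t \<le> norm y * norm x"
    unfolding t_def by (rule norm_cauchy_schwarz)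
  also have "\<dots> \<le> M * r"
    using assms(1) by (simp add: r_def mult_right_mono)
  finally have t_le: "t \<le> M * r" .
  have xx: "x \<bullet> x = r * r"
    by (simp add: r_def power2_norm_eq_inner[symmetric] power2_eq_square)
  have "(norm (y - x))\<^sup>2 - (norm (y - c *\<^sub>R x))\<^sup>2 = (1 - c) * (r * r + (c * r) * r - 2 * t)"
    unfolding power2_norm_eq_inner t_def
    by (simp add: inner_diff_left inner_diff_right inner_commute xx algebra_simps)
  also have "\<dots> > 0"
  proof (rule mult_pos_pos)
    show "0 < 1 - c"
      using c1 by simp
    have "M * r < r * r"
      using assms(2) r0 by (simp add: r_def mult_strict_right_mono)
    moreover have "(c * r) * r = M * r"
      using cr by simp
    ultimately show "0 < r * r + (c * r) * r - 2 * t"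
      using t_le by linarith
  qed
  finally have "(norm (y - c *\<^sub>R x))\<^sup>2 < (norm (y - x))\<^sup>2"
    by simp
  then show ?thesis
    using assms(2) by (simp add: radial_proj_def c_def r_def power2_less_imp_less)
qed

lemma norm_diff_radial_proj_le:
  fixes x y :: "'a::real_inner"
  assumes "norm y \<le> M"
  shows "norm (y - radial_proj M x) \<le> norm (y - x)"
  using norm_diff_radial_proj_less[OF assms, of x]
  by (cases "norm x \<le> M") (auto simp: radial_proj_def)

lemma distr_radial_proj_mixing:
  fixes \<nu> :: "'a::euclidean_space measure"
  assumes "\<nu> \<in> mixing_measures"
  shows "distr \<nu> borel (radial_proj M) \<in> mixing_measures"
proof -
  have "radial_proj M \<in> measurable \<nu> borel"
    by (rule borel_measurable_mixing[OF assms]) simp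
  then show ?thesis
    using mixing_measuresD(1)[OF assms] by (simp add: mixing_measures_def prob_space.prob_space_distr)
qed

text \<open>Pushing the mass outside the ball radially onto its boundary moves it strictly closer to
  every point of the ball.\<close>
lemma mix_dens_less_distr_radial_proj:
  fixes \<nu> :: "'a::euclidean_space measure"
  assumes "\<sigma> \<noteq> 0" and \<nu>: "\<nu> \<in> mixing_measures" and "\<not> (AE \<theta> in \<nu>. norm \<theta> \<le> M)"
    and "norm y \<le> M"
  shows "mix_dens \<sigma> \<nu> y < mix_dens \<sigma> (distr \<nu> borel (radial_proj M)) y"
proof -
  interpret prob_space \<nu>
    using mixing_measuresD(1)[OF \<nu>] .
  define A where "A = {\<theta>::'a. M < norm \<theta>}"
  have proj_meas: "radial_proj M \<in> measurable \<nu> borel"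
    by (rule borel_measurable_mixing[OF \<nu>]) simp
  have A_sets: "A \<in> sets \<nu>"
    unfolding A_def mixing_measuresD(2)[OF \<nu>] by measurable
  have "space \<nu> = UNIV"
    using sets_eq_imp_space_eq[OF mixing_measuresD(2)[OF \<nu>]] by simp
  then have A_pos: "emeasure \<nu> A \<noteq> 0"
    using assms(3) AE_iff_measurable[OF A_sets, of "\<lambda>\<theta>. norm \<theta> \<le> M"] by (auto simp: A_def not_le)
  have "mix_dens \<sigma> \<nu> y < integral\<^sup>L \<nu> (\<lambda>\<theta>. gauss_dens \<sigma> (y - radial_proj M \<theta>))"
    unfolding mix_dens_def
  proof (rule integral_less_AE[OF integrable_mixing_gauss_dens[OF \<nu>] _ A_pos A_sets])
    show "integrable \<nu> (\<lambda>\<theta>. gauss_dens \<sigma> (y - radial_proj M \<theta>))"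
      using integrable_mixing_gauss_dens[OF distr_radial_proj_mixing[OF \<nu>, of M], of \<sigma> y]
      by (simp add: integrable_distr_eq[OF proj_meas])
    show "AE \<theta> in \<nu>. \<theta> \<in> A \<longrightarrow> gauss_dens \<sigma> (y - \<theta>) \<noteq> gauss_dens \<sigma> (y - radial_proj M \<theta>)"
    proof (intro AE_I2 impI)
      fix \<theta> assume "\<theta> \<in> A"
      then have "norm (y - radial_proj M \<theta>) < norm (y - \<theta>)"
        using assms(4) by (intro norm_diff_radial_proj_less) (auto simp: A_def)
      then show "gauss_dens \<sigma> (y - \<theta>) \<noteq> gauss_dens \<sigma> (y - radial_proj M \<theta>)"
        using gauss_dens_strict_antimono[OF assms(1)] by fastforce
    qed
    show "AE \<theta> in \<nu>. gauss_dens \<sigma> (y - \<theta>) \<le> gauss_dens \<sigma> (y - radial_proj M \<theta>)"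
      using assms(4) by (auto intro: gauss_dens_antimono norm_diff_radial_proj_le)
  qed
  also have "\<dots> = mix_dens \<sigma> (distr \<nu> borel (radial_proj M)) y"
    unfolding mix_dens_def by (rule integral_distr[symmetric, OF proj_meas]) measurable
  finally show ?thesis .
qed

lemma npmle_mixing_AE_norm_le:
  fixes Y :: "nat \<Rightarrow> 'a::euclidean_space"
  assumes "\<sigma> \<noteq> 0" and npmle: "npmle_mixing \<sigma> n Y \<nu>" and "n \<ge> 1" and "\<forall>i<n. norm (Y i) \<le> M"
  shows "AE \<theta> in \<nu>. norm \<theta> \<le> M"
proof (rule ccontr)
  assume not_AE: "\<not> (AE \<theta> in \<nu>. norm \<theta> \<le> M)"
  define \<mu> where "\<mu> = distr \<nu> borel (radial_proj M)"
  have \<nu>: "\<nu> \<in> mixing_measures"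
    using npmle by (simp add: npmle_mixing_def)
  then have \<mu>: "\<mu> \<in> mixing_measures"
    unfolding \<mu>_def by (rule distr_radial_proj_mixing)
  have "(\<Sum>i<n. ln (mix_dens \<sigma> \<nu> (Y i))) < (\<Sum>i<n. ln (mix_dens \<sigma> \<mu> (Y i)))"
  proof (rule sum_strict_mono)
    fix i assume "i \<in> {..<n}"
    then have "mix_dens \<sigma> \<nu> (Y i) < mix_dens \<sigma> \<mu> (Y i)"
      unfolding \<mu>_def using assms(1,4) \<nu> not_AE by (intro mix_dens_less_distr_radial_proj) auto
    then show "ln (mix_dens \<sigma> \<nu> (Y i)) < ln (mix_dens \<sigma> \<mu> (Y i))"
      using mix_dens_pos[OF assms(1) \<nu>] mix_dens_pos[OF assms(1) \<mu>] by simp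
  qed (use assms(3) in \<open>auto simp: lessThan_empty_iff\<close>)
  with npmle \<mu> show False
    unfolding npmle_mixing_def by fastforce
qed

section \<open>Moments under a Hellinger constraint\<close>

lemma nn_integral_sqrt_diff_square_le_hellinger:
  fixes f g :: "'a::euclidean_space \<Rightarrow> real"
  assumes f: "integrable lborel f" "\<And>y. 0 \<le> f y" and g: "integrable lborel g" "\<And>y. 0 \<le> g y"
    and "hellinger f g \<le> h"
  shows "(\<integral>\<^sup>+y. ennreal ((sqrt (f y) - sqrt (g y))\<^sup>2) \<partial>lborel) \<le> ennreal (h\<^sup>2)"
proof -
  define D where "D = (\<lambda>y. (sqrt (f y) - sqrt (g y))\<^sup>2)"
  have D_le: "D y \<le> 2 * f y + 2 * g y" for y
  proof -
    have "0 \<le> (sqrt (f y) + sqrt (g y))\<^sup>2"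
      by simp
    then show ?thesis
      using f(2)[of y] g(2)[of y] unfolding D_def power2_eq_square by (simp add: algebra_simps)
  qed
  have D_int: "integrable lborel D"
  proof (rule Bochner_Integration.integrable_bound)
    show "integrable lborel (\<lambda>y. 2 * f y + 2 * g y)"
      using f(1) g(1) by simp
    show "D \<in> borel_measurable lborel"
      unfolding D_def using f(1) g(1) by measurable
    show "AE y in lborel. norm (D y) \<le> norm (2 * f y + 2 * g y)"
      using D_le f(2) g(2) by (intro AE_I2) (simp add: D_def)
  qed
  have "integral\<^sup>L lborel D \<le> h\<^sup>2"
    using assms(5) by (intro sqrt_le_D) (simp add: hellinger_def D_def)
  moreover have "(\<integral>\<^sup>+y. ennreal (D y) \<partial>lborel) = ennreal (integral\<^sup>L lborel D)"
    by (intro nn_integral_eq_integral D_int) (simp add: D_def)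
  ultimately show ?thesis
    by (simp add: D_def ennreal_leI)
qed

lemma nn_integral_norm_powr_le_of_AE_bound:
  assumes "prob_space \<nu>" and "AE \<theta> in \<nu>. norm \<theta> \<le> M" and "p \<ge> 0"
  shows "(\<integral>\<^sup>+\<theta>. ennreal (norm \<theta> powr p) \<partial>\<nu>) \<le> ennreal (M powr p)"
proof -
  interpret prob_space \<nu>
    by (rule assms(1))
  have "(\<integral>\<^sup>+\<theta>. ennreal (norm \<theta> powr p) \<partial>\<nu>) \<le> (\<integral>\<^sup>+\<theta>. ennreal (M powr p) \<partial>\<nu>)"
    using assms(2,3) by (intro nn_integral_mono_AE) (auto elim!: eventually_mono intro!: ennreal_leI powr_mono2)
  then show ?thesis
    by (simp add: emeasure_space_1)
qed

lemma norm_powr_mult_mix_dens_le: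
  fixes \<nu> :: "'a::euclidean_space measure" and y :: 'a
  assumes \<nu>: "\<nu> \<in> mixing_measures" and AE_bound: "AE \<theta> in \<nu>. norm \<theta> \<le> M" and "p \<ge> 0" and "0 \<le> a"
  shows "norm y powr p * mix_dens \<sigma> \<nu> y
    \<le> 2 * (norm y powr p * a) + 2 * (2 * M) powr p * (sqrt a - sqrt (mix_dens \<sigma> \<nu> y))\<^sup>2
      + 2 powr real DIM('a) * (norm y powr p * gauss_dens (2 * \<sigma>) y)"
    (is "?m \<le> ?near + ?far")
proof (cases "norm y < 2 * M")
  case True
  define D where "D = (sqrt a - sqrt (mix_dens \<sigma> \<nu> y))\<^sup>2"
  have "c\<^sup>2 \<le> 2 * b\<^sup>2 + 2 * (b - c)\<^sup>2" for b c :: real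
    using zero_le_power2[of "2 * b - c"] unfolding power2_eq_square by (simp add: algebra_simps)
  from this[where b = "sqrt a" and c = "sqrt (mix_dens \<sigma> \<nu> y)"]
  have "mix_dens \<sigma> \<nu> y \<le> 2 * a + 2 * D"
    using \<open>0 \<le> a\<close> by (simp add: D_def)
  then have "?m \<le> norm y powr p * (2 * a + 2 * D)"
    by (rule mult_left_mono) simp
  also have "\<dots> = 2 * (norm y powr p * a) + 2 * (norm y powr p * D)"
    by (simp add: algebra_simps)
  also have "norm y powr p * D \<le> (2 * M) powr p * D"
    using True \<open>p \<ge> 0\<close> by (intro mult_right_mono powr_mono2) (auto simp: D_def)
  finally have "?m \<le> ?near"
    by (simp add: D_def mult.assoc)
  then show ?thesis
    by (simp add: add_increasing2)
next
  case False
  then have "mix_dens \<sigma> \<nu> y \<le> 2 powr real DIM('a) * gauss_dens (2 * \<sigma>) y"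
    by (intro mix_dens_le_far[OF \<nu> AE_bound]) simp
  then have "?m \<le> norm y powr p * (2 powr real DIM('a) * gauss_dens (2 * \<sigma>) y)"
    by (rule mult_left_mono) simp
  then have "?m \<le> ?far"
    by (simp only: mult.left_commute)
  moreover have "0 \<le> ?near"
    using \<open>0 \<le> a\<close> by simp
  ultimately show ?thesis
    by linarith
qed

lemma nn_integral_mix_dens_moment_le:
  fixes \<nu> :: "'a::euclidean_space measure" and f :: "'a \<Rightarrow> real"
  assumes \<nu>: "\<nu> \<in> mixing_measures" and AE_bound: "AE \<theta> in \<nu>. norm \<theta> \<le> M" and "p \<ge> 0"
    and f: "\<And>y. 0 \<le> f y" "f \<in> borel_measurable borel"
  shows "(\<integral>\<^sup>+y. ennreal (norm y powr p * mix_dens \<sigma> \<nu> y) \<partial>lborel)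
    \<le> 2 * (\<integral>\<^sup>+y. ennreal (norm y powr p * f y) \<partial>lborel)
      + ennreal (2 * (2 * M) powr p) * (\<integral>\<^sup>+y. ennreal ((sqrt (f y) - sqrt (mix_dens \<sigma> \<nu> y))\<^sup>2) \<partial>lborel)
      + ennreal (2 powr real DIM('a)) * (\<integral>\<^sup>+y. ennreal (norm (y::'a) powr p * gauss_dens (2 * \<sigma>) y) \<partial>lborel)"
proof -
  define D where "D = (\<lambda>y. (sqrt (f y) - sqrt (mix_dens \<sigma> \<nu> y))\<^sup>2)"
  define c1 where "c1 = 2 * (2 * M) powr p"
  define c2 :: real where "c2 = 2 powr real DIM('a)"
  have [measurable]: "mix_dens \<sigma> \<nu> \<in> borel_measurable borel" "f \<in> borel_measurable borel"
    using borel_measurable_mix_dens[OF \<nu>] f(2) by auto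
  have [measurable]: "D \<in> borel_measurable borel"
    unfolding D_def by measurable
  have "ennreal (norm y powr p * mix_dens \<sigma> \<nu> y)
      \<le> 2 * ennreal (norm y powr p * f y) + ennreal c1 * ennreal (D y)
        + ennreal c2 * ennreal (norm y powr p * gauss_dens (2 * \<sigma>) y)" for y
  proof -
    have "ennreal (norm y powr p * mix_dens \<sigma> \<nu> y)
        \<le> ennreal (2 * (norm y powr p * f y) + c1 * D y + c2 * (norm y powr p * gauss_dens (2 * \<sigma>) y))"
      unfolding c1_def c2_def D_def
      using norm_powr_mult_mix_dens_le[OF \<nu> AE_bound \<open>p \<ge> 0\<close> f(1)] by (intro ennreal_leI) simp
    also have "\<dots> = ennreal (2 * (norm y powr p * f y)) + ennreal (c1 * D y)
        + ennreal (c2 * (norm y powr p * gauss_dens (2 * \<sigma>) y))"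
      using f(1)[of y] by (simp add: c1_def c2_def D_def)
    also have "\<dots> = 2 * ennreal (norm y powr p * f y) + ennreal c1 * ennreal (D y)
        + ennreal c2 * ennreal (norm y powr p * gauss_dens (2 * \<sigma>) y)"
      using f(1)[of y] by (simp add: c1_def c2_def D_def ennreal_mult)
    finally show ?thesis .
  qed
  then have "(\<integral>\<^sup>+y. ennreal (norm y powr p * mix_dens \<sigma> \<nu> y) \<partial>lborel)
      \<le> (\<integral>\<^sup>+y. 2 * ennreal (norm y powr p * f y) + ennreal c1 * ennreal (D y)
          + ennreal c2 * ennreal (norm y powr p * gauss_dens (2 * \<sigma>) y) \<partial>lborel)"
    by (rule nn_integral_mono)
  also have "\<dots> = 2 * (\<integral>\<^sup>+y. ennreal (norm y powr p * f y) \<partial>lborel)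
      + ennreal c1 * (\<integral>\<^sup>+y. ennreal (D y) \<partial>lborel)
      + ennreal c2 * (\<integral>\<^sup>+y. ennreal (norm (y::'a) powr p * gauss_dens (2 * \<sigma>) y) \<partial>lborel)"
    by (simp add: nn_integral_add nn_integral_cmult)
  finally show ?thesis
    unfolding D_def c1_def c2_def .
qed

lemma nn_integral_mixing_moment_le_hellinger:
  fixes \<nu> :: "'a::euclidean_space measure" and f :: "'a \<Rightarrow> real"
  assumes "\<sigma> > 0" and \<nu>: "\<nu> \<in> mixing_measures" and AE_bound: "AE \<theta> in \<nu>. norm \<theta> \<le> M"
    and "0 \<le> M" and "p \<ge> 0"
    and f: "integrable lborel f" "\<And>y. 0 \<le> f y"
    and hellinger: "hellinger f (mix_dens \<sigma> \<nu>) \<le> h"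
    and m_f: "(\<integral>\<^sup>+y. ennreal (norm y powr p * f y) \<partial>lborel) \<le> ennreal m_f" "0 \<le> m_f"
    and m_g: "(\<integral>\<^sup>+y. ennreal (norm (y::'a) powr p * gauss_dens (2 * \<sigma>) y) \<partial>lborel) \<le> ennreal m_g"
      "0 \<le> m_g"
  shows "(\<integral>\<^sup>+\<theta>. ennreal (norm \<theta> powr p) \<partial>\<nu>)
    \<le> ennreal (4 * m_f + 2 * 2 powr real DIM('a) * m_g + M powr p * (4 * 2 powr p * h\<^sup>2))"
proof -
  have "(\<integral>\<^sup>+y. ennreal ((sqrt (f y) - sqrt (mix_dens \<sigma> \<nu> y))\<^sup>2) \<partial>lborel) \<le> ennreal (h\<^sup>2)"
    using f hellinger integrable_mix_dens[OF assms(1) \<nu>]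
    by (intro nn_integral_sqrt_diff_square_le_hellinger) auto
  moreover have "(\<integral>\<^sup>+y. ennreal (norm y powr p * mix_dens \<sigma> \<nu> y) \<partial>lborel)
      \<le> 2 * (\<integral>\<^sup>+y. ennreal (norm y powr p * f y) \<partial>lborel)
        + ennreal (2 * (2 * M) powr p) * (\<integral>\<^sup>+y. ennreal ((sqrt (f y) - sqrt (mix_dens \<sigma> \<nu> y))\<^sup>2) \<partial>lborel)
        + ennreal (2 powr real DIM('a)) * (\<integral>\<^sup>+y. ennreal (norm (y::'a) powr p * gauss_dens (2 * \<sigma>) y) \<partial>lborel)"
    using f by (intro nn_integral_mix_dens_moment_le[OF \<nu> AE_bound \<open>p \<ge> 0\<close>]) auto
  ultimately have "(\<integral>\<^sup>+y. ennreal (norm y powr p * mix_dens \<sigma> \<nu> y) \<partial>lborel)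
      \<le> 2 * ennreal m_f + ennreal (2 * (2 * M) powr p) * ennreal (h\<^sup>2)
        + ennreal (2 powr real DIM('a)) * ennreal m_g"
    using m_f(1) m_g(1) by (elim order_trans) (intro add_mono mult_left_mono; simp)
  then have "(\<integral>\<^sup>+\<theta>. ennreal (norm \<theta> powr p) \<partial>\<nu>)
      \<le> 2 * (2 * ennreal m_f + ennreal (2 * (2 * M) powr p) * ennreal (h\<^sup>2)
        + ennreal (2 powr real DIM('a)) * ennreal m_g)"
    using nn_integral_mixing_moment_le[OF assms(1) \<nu> \<open>p \<ge> 0\<close>] by (meson mult_left_mono order_trans zero_le)
  also have "\<dots> = ennreal (4 * m_f + 2 * 2 powr real DIM('a) * m_g + M powr p * (4 * 2 powr p * h\<^sup>2))"
    using m_f(2) m_g(2) \<open>0 \<le> M\<close> by (simp add: ennreal_mult ennreal_plus powr_mult algebra_simps)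
  finally show ?thesis .
qed

lemma min_le_add_mult_min_one:
  fixes X K k :: real
  assumes "0 \<le> X" and "0 \<le> K"
  shows "min X (K + X * k) \<le> K + X * min 1 k"
proof (cases "k \<le> 1")
  case True
  then show ?thesis
    by (simp add: min.absorb2)
next
  case False
  then show ?thesis
    using assms by (simp add: min_le_iff_disj)
qed

lemma npmle_mixing_moment_le:
  fixes Y :: "nat \<Rightarrow> 'a::euclidean_space" and f :: "'a \<Rightarrow> real"
  assumes "\<sigma> > 0" and "p \<ge> 0"
    and npmle: "npmle_mixing \<sigma> n Y \<nu>" and "n \<ge> 1" and Y_le: "\<forall>i<n. norm (Y i) \<le> M"
    and f: "integrable lborel f" "\<And>y. 0 \<le> f y"
    and hellinger: "hellinger f (mix_dens \<sigma> \<nu>) \<le> h"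
    and m_f: "(\<integral>\<^sup>+y. ennreal (norm y powr p * f y) \<partial>lborel) \<le> ennreal m_f" "0 \<le> m_f"
    and m_g: "(\<integral>\<^sup>+y. ennreal (norm (y::'a) powr p * gauss_dens (2 * \<sigma>) y) \<partial>lborel) \<le> ennreal m_g"
      "0 \<le> m_g"
  shows "(\<integral>\<^sup>+\<theta>. ennreal (norm \<theta> powr p) \<partial>\<nu>)
    \<le> ennreal (4 * m_f + 2 * 2 powr real DIM('a) * m_g + M powr p * min 1 (4 * 2 powr p * h\<^sup>2))"
proof -
  define K where "K = 4 * m_f + 2 * 2 powr real DIM('a) * m_g"
  have \<nu>: "\<nu> \<in> mixing_measures"
    using npmle by (simp add: npmle_mixing_def)
  have "norm (Y 0) \<le> M"
    using Y_le \<open>n \<ge> 1\<close> by simp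
  then have "0 \<le> M"
    using norm_ge_zero order_trans by blast
  have AE_bound: "AE \<theta> in \<nu>. norm \<theta> \<le> M"
    using assms(1) npmle \<open>n \<ge> 1\<close> Y_le by (intro npmle_mixing_AE_norm_le) auto
  have "(\<integral>\<^sup>+\<theta>. ennreal (norm \<theta> powr p) \<partial>\<nu>) \<le> ennreal (M powr p)"
    using mixing_measuresD(1)[OF \<nu>] AE_bound \<open>p \<ge> 0\<close> by (rule nn_integral_norm_powr_le_of_AE_bound)
  moreover have "(\<integral>\<^sup>+\<theta>. ennreal (norm \<theta> powr p) \<partial>\<nu>) \<le> ennreal (K + M powr p * (4 * 2 powr p * h\<^sup>2))"
    unfolding K_def using assms(1) \<nu> AE_bound \<open>0 \<le> M\<close> \<open>p \<ge> 0\<close> f hellinger m_f m_g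
    by (rule nn_integral_mixing_moment_le_hellinger)
  ultimately have "(\<integral>\<^sup>+\<theta>. ennreal (norm \<theta> powr p) \<partial>\<nu>)
      \<le> ennreal (min (M powr p) (K + M powr p * (4 * 2 powr p * h\<^sup>2)))"
    using m_f(2) m_g(2) by (simp add: K_def min_ennreal[symmetric])
  also have "\<dots> \<le> ennreal (K + M powr p * min 1 (4 * 2 powr p * h\<^sup>2))"
    using m_f(2) m_g(2) by (intro ennreal_leI min_le_add_mult_min_one) (simp_all add: K_def)
  finally show ?thesis
    by (simp add: K_def)
qed

section \<open>The empirical mixture\<close>

lemma emp_mix_dens_nonneg [simp]: "0 \<le> emp_mix_dens \<sigma> \<theta> n y"
  unfolding emp_mix_dens_def by (simp add: sum_nonneg)

lemma borel_measurable_emp_mix_dens [measurable]: "emp_mix_dens \<sigma> \<theta> n \<in> borel_measurable borel"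
  unfolding emp_mix_dens_def by measurable

lemma nn_integral_emp_mix_dens_mult:
  fixes \<theta> :: "nat \<Rightarrow> 'a::euclidean_space" and w :: "'a \<Rightarrow> ennreal"
  assumes [measurable]: "w \<in> borel_measurable borel"
  shows "(\<integral>\<^sup>+y. ennreal (emp_mix_dens \<sigma> \<theta> n y) * w y \<partial>lborel)
    = ennreal (1 / real n) * (\<Sum>i<n. \<integral>\<^sup>+y. ennreal (gauss_dens \<sigma> (y - \<theta> i)) * w y \<partial>lborel)"
proof -
  have pointwise: "ennreal (emp_mix_dens \<sigma> \<theta> n y) * w y
      = ennreal (1 / real n) * (\<Sum>i<n. ennreal (gauss_dens \<sigma> (y - \<theta> i)) * w y)" for y
  proof -
    have "ennreal (emp_mix_dens \<sigma> \<theta> n y) = ennreal (1 / real n) * ennreal (\<Sum>i<n. gauss_dens \<sigma> (y - \<theta> i))"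
      unfolding emp_mix_dens_def by (rule ennreal_mult) (simp_all add: sum_nonneg)
    also have "ennreal (\<Sum>i<n. gauss_dens \<sigma> (y - \<theta> i)) = (\<Sum>i<n. ennreal (gauss_dens \<sigma> (y - \<theta> i)))"
      by (rule sum_ennreal[symmetric]) simp
    finally show ?thesis
      by (simp only: sum_distrib_right mult.assoc)
  qed
  have "(\<integral>\<^sup>+y. ennreal (emp_mix_dens \<sigma> \<theta> n y) * w y \<partial>lborel)
      = (\<integral>\<^sup>+y. ennreal (1 / real n) * (\<Sum>i<n. ennreal (gauss_dens \<sigma> (y - \<theta> i)) * w y) \<partial>lborel)"
    by (intro nn_integral_cong pointwise)
  also have "\<dots> = ennreal (1 / real n) * (\<Sum>i<n. \<integral>\<^sup>+y. ennreal (gauss_dens \<sigma> (y - \<theta> i)) * w y \<partial>lborel)"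
    by (simp add: nn_integral_cmult nn_integral_sum)
  finally show ?thesis .
qed

lemma nn_integral_emp_mix_dens_mult_le:
  fixes \<theta> :: "nat \<Rightarrow> 'a::euclidean_space" and w :: "'a \<Rightarrow> ennreal"
  assumes "n \<ge> 1" and "w \<in> borel_measurable borel" and "0 \<le> c"
    and "\<And>i. i < n \<Longrightarrow> (\<integral>\<^sup>+y. ennreal (gauss_dens \<sigma> (y - \<theta> i)) * w y \<partial>lborel) \<le> ennreal c"
  shows "(\<integral>\<^sup>+y. ennreal (emp_mix_dens \<sigma> \<theta> n y) * w y \<partial>lborel) \<le> ennreal c"
proof -
  have "(\<Sum>i<n. \<integral>\<^sup>+y. ennreal (gauss_dens \<sigma> (y - \<theta> i)) * w y \<partial>lborel) \<le> (\<Sum>i<n. ennreal c)"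
    using assms(4) by (intro sum_mono) auto
  also have "\<dots> = ennreal (real n * c)"
    using assms(3) by (simp add: ennreal_mult ennreal_of_nat_eq_real_of_nat)
  finally have "ennreal (1 / real n) * (\<Sum>i<n. \<integral>\<^sup>+y. ennreal (gauss_dens \<sigma> (y - \<theta> i)) * w y \<partial>lborel)
      \<le> ennreal (1 / real n) * ennreal (real n * c)"
    by (rule mult_left_mono) simp
  also have "\<dots> = ennreal c"
    using assms(1,3) by (simp add: ennreal_mult[symmetric])
  finally show ?thesis
    by (simp add: nn_integral_emp_mix_dens_mult[OF assms(2)])
qed

lemma nn_integral_emp_mix_dens:
  fixes \<theta> :: "nat \<Rightarrow> 'a::euclidean_space"
  assumes "\<sigma> > 0" and "n \<ge> 1"
  shows "(\<integral>\<^sup>+y. ennreal (emp_mix_dens \<sigma> \<theta> n y) \<partial>lborel) = 1"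
proof -
  have "(\<integral>\<^sup>+y. ennreal (emp_mix_dens \<sigma> \<theta> n y) * 1 \<partial>lborel)
      = ennreal (1 / real n) * (\<Sum>i<n. \<integral>\<^sup>+y. ennreal (gauss_dens \<sigma> (y - \<theta> i)) * 1 \<partial>lborel)"
    by (rule nn_integral_emp_mix_dens_mult) simp
  also have "\<dots> = ennreal (1 / real n) * of_nat n"
    using assms(1)
    by (simp add: nn_integral_lborel_translate[where f = "\<lambda>z. ennreal (gauss_dens \<sigma> z)"] nn_integral_gauss_dens)
  also have "\<dots> = 1"
    using assms(2) by (simp add: ennreal_of_nat_eq_real_of_nat ennreal_mult[symmetric])
  finally show ?thesis
    by simp
qed

lemma integrable_emp_mix_dens:
  fixes \<theta> :: "nat \<Rightarrow> 'a::euclidean_space"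
  assumes "\<sigma> > 0" and "n \<ge> 1"
  shows "integrable lborel (emp_mix_dens \<sigma> \<theta> n)"
  using assms by (intro integrableI_nonneg) (auto simp: nn_integral_emp_mix_dens)

lemma nn_integral_shifted_gauss_dens_moment_le:
  fixes x :: "'a::euclidean_space"
  assumes "\<sigma> > 0" and "p \<ge> 0" and "norm x \<le> B"
    and m: "(\<integral>\<^sup>+z. ennreal (norm (z::'a) powr p * gauss_dens \<sigma> z) \<partial>lborel) \<le> ennreal m" "0 \<le> m"
  shows "(\<integral>\<^sup>+y. ennreal (gauss_dens \<sigma> (y - x)) * ennreal (norm y powr p) \<partial>lborel)
    \<le> ennreal (2 powr p * (m + B powr p))"
proof -
  have "0 \<le> B"
    using assms(3) norm_ge_zero[of x] by linarith
  have "ennreal (gauss_dens \<sigma> (y - x)) * ennreal (norm y powr p)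
      \<le> ennreal (2 powr p) * (ennreal (norm (y - x) powr p * gauss_dens \<sigma> (y - x))
        + ennreal (B powr p) * ennreal (gauss_dens \<sigma> (y - x)))" for y
  proof -
    have "norm y \<le> norm (y - x) + B"
      using norm_triangle_ineq[of "y - x" x] assms(3) by simp
    then have "norm y powr p \<le> (norm (y - x) + B) powr p"
      using assms(2) by (intro powr_mono2) auto
    also have "\<dots> \<le> 2 powr p * (norm (y - x) powr p + B powr p)"
      using \<open>0 \<le> B\<close> assms(2) by (intro powr_add_le_two_powr) auto
    finally have "gauss_dens \<sigma> (y - x) * norm y powr p
        \<le> gauss_dens \<sigma> (y - x) * (2 powr p * (norm (y - x) powr p + B powr p))"
      by (rule mult_left_mono) simp
    also have "\<dots> = 2 powr p * (norm (y - x) powr p * gauss_dens \<sigma> (y - x) + B powr p * gauss_dens \<sigma> (y - x))"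
      by (simp add: algebra_simps)
    finally have "gauss_dens \<sigma> (y - x) * norm y powr p
        \<le> 2 powr p * (norm (y - x) powr p * gauss_dens \<sigma> (y - x) + B powr p * gauss_dens \<sigma> (y - x))" .
    then show ?thesis
      by (simp add: ennreal_mult[symmetric] ennreal_plus[symmetric] ennreal_leI del: ennreal_plus)
  qed
  then have "(\<integral>\<^sup>+y. ennreal (gauss_dens \<sigma> (y - x)) * ennreal (norm y powr p) \<partial>lborel)
      \<le> (\<integral>\<^sup>+y. ennreal (2 powr p) * (ennreal (norm (y - x) powr p * gauss_dens \<sigma> (y - x))
        + ennreal (B powr p) * ennreal (gauss_dens \<sigma> (y - x))) \<partial>lborel)"
    by (rule nn_integral_mono)
  also have "\<dots> = ennreal (2 powr p) * ((\<integral>\<^sup>+z. ennreal (norm (z::'a) powr p * gauss_dens \<sigma> z) \<partial>lborel)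
      + ennreal (B powr p) * (\<integral>\<^sup>+z. ennreal (gauss_dens \<sigma> (z::'a)) \<partial>lborel))"
    by (simp add: nn_integral_cmult nn_integral_add
        nn_integral_lborel_translate[where f = "\<lambda>z. ennreal (norm z powr p * gauss_dens \<sigma> z)"]
        nn_integral_lborel_translate[where f = "\<lambda>z. ennreal (gauss_dens \<sigma> z)"])
  also have "\<dots> \<le> ennreal (2 powr p) * (ennreal m + ennreal (B powr p))"
    using assms(1) m(1) by (simp add: nn_integral_gauss_dens add_mono mult_left_mono)
  also have "\<dots> = ennreal (2 powr p * (m + B powr p))"
    using m(2) \<open>0 \<le> B\<close> by (simp add: ennreal_mult ennreal_plus)
  finally show ?thesis .
qed

lemma nn_integral_emp_mix_dens_moment_le:
  fixes \<theta> :: "nat \<Rightarrow> 'a::euclidean_space"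
  assumes "\<sigma> > 0" and "p \<ge> 0" and "n \<ge> 1" and "\<forall>i<n. norm (\<theta> i) \<le> B" and "0 \<le> B"
    and m: "(\<integral>\<^sup>+z. ennreal (norm (z::'a) powr p * gauss_dens \<sigma> z) \<partial>lborel) \<le> ennreal m" "0 \<le> m"
  shows "(\<integral>\<^sup>+y. ennreal (norm y powr p * emp_mix_dens \<sigma> \<theta> n y) \<partial>lborel) \<le> ennreal (2 powr p * (m + B powr p))"
proof -
  have "(\<integral>\<^sup>+y. ennreal (norm y powr p * emp_mix_dens \<sigma> \<theta> n y) \<partial>lborel)
      = (\<integral>\<^sup>+y. ennreal (emp_mix_dens \<sigma> \<theta> n y) * ennreal (norm y powr p) \<partial>lborel)"
    by (simp add: ennreal_mult[symmetric] mult.commute)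
  also have "\<dots> \<le> ennreal (2 powr p * (m + B powr p))"
    using assms m(2)
    by (intro nn_integral_emp_mix_dens_mult_le nn_integral_shifted_gauss_dens_moment_le[OF _ _ _ m(1)]) auto
  finally show ?thesis .
qed

lemma nn_integral_emp_mix_dens_tail:
  fixes \<theta> :: "nat \<Rightarrow> 'a::euclidean_space"
  assumes "\<sigma> > 0" and "n \<ge> 1" and "\<forall>i<n. norm (\<theta> i) \<le> B" and "u \<ge> 0"
  shows "(\<integral>\<^sup>+y. ennreal (emp_mix_dens \<sigma> \<theta> n y) * indicator {y. B + u < norm y} y \<partial>lborel)
    \<le> ennreal (2 powr (real DIM('a) / 2) * exp (- u\<^sup>2 / (4 * \<sigma>\<^sup>2)))"
proof (rule nn_integral_emp_mix_dens_mult_le[OF assms(2)])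
  fix i assume "i < n"
  have "(\<integral>\<^sup>+y. ennreal (gauss_dens \<sigma> (y - \<theta> i)) * indicator {y. B + u < norm y} y \<partial>lborel)
      \<le> (\<integral>\<^sup>+y. ennreal (indicator {z. u \<le> norm z} (y - \<theta> i) * gauss_dens \<sigma> (y - \<theta> i)) \<partial>lborel)"
  proof (rule nn_integral_mono)
    fix y :: 'a
    have "u \<le> norm (y - \<theta> i)" if "B + u < norm y"
      using that norm_triangle_ineq[of "y - \<theta> i" "\<theta> i"] assms(3) \<open>i < n\<close> by fastforce
    then show "ennreal (gauss_dens \<sigma> (y - \<theta> i)) * indicator {y. B + u < norm y} y
        \<le> ennreal (indicator {z. u \<le> norm z} (y - \<theta> i) * gauss_dens \<sigma> (y - \<theta> i))"
      by (simp add: indicator_def)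
  qed
  also have "\<dots> = (\<integral>\<^sup>+z. ennreal (indicator {z. u \<le> norm z} z * gauss_dens \<sigma> (z::'a)) \<partial>lborel)"
    by (rule nn_integral_lborel_translate) measurable
  also have "\<dots> \<le> ennreal (2 powr (real DIM('a) / 2) * exp (- u\<^sup>2 / (4 * \<sigma>\<^sup>2)))"
    using assms(1,4) by (rule nn_integral_gauss_dens_tail)
  finally show "(\<integral>\<^sup>+y. ennreal (gauss_dens \<sigma> (y - \<theta> i)) * indicator {y. B + u < norm y} y \<partial>lborel) \<le> \<dots>" .
qed auto

section \<open>Moments for samples close to the centres\<close>

lemma powr_add_mult_min_one_le:
  fixes B u p K h :: real
  assumes "0 \<le> B" and "0 \<le> u" and "0 \<le> p" and "0 \<le> K" and "0 \<le> h"
  shows "(B + u) powr p * min 1 (K * h\<^sup>2) \<le> 2 powr p * B powr p + 2 powr p * sqrt K * u powr p * h"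
proof -
  have min_le_sqrt: "min 1 (K * h\<^sup>2) \<le> sqrt K * h"
  proof (cases "sqrt K * h \<le> 1")
    case True
    have "K * h\<^sup>2 = (sqrt K * h)\<^sup>2"
      using assms(4) by (simp add: power_mult_distrib)
    also have "\<dots> \<le> sqrt K * h"
      using True assms(4,5) by (simp add: power2_eq_square mult_left_le)
    finally show ?thesis
      by simp
  qed simp
  have "(B + u) powr p * min 1 (K * h\<^sup>2) \<le> 2 powr p * (B powr p + u powr p) * min 1 (K * h\<^sup>2)"
    using assms by (intro mult_right_mono powr_add_le_two_powr) auto
  also have "\<dots> = 2 powr p * B powr p * min 1 (K * h\<^sup>2) + 2 powr p * u powr p * min 1 (K * h\<^sup>2)"
    by (simp add: algebra_simps)
  also have "\<dots> \<le> 2 powr p * B powr p * 1 + 2 powr p * u powr p * (sqrt K * h)"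
    using min_le_sqrt by (intro add_mono mult_left_mono) auto
  finally show ?thesis
    by (simp add: mult_ac)
qed

lemma npmle_moment_le_of_sample_near_centers:
  fixes \<theta> \<omega> :: "nat \<Rightarrow> 'a::euclidean_space"
  assumes "\<sigma> > 0" and "p \<ge> 0" and "n \<ge> 1" and "0 \<le> B" and "\<forall>i<n. norm (\<theta> i) \<le> B"
    and "npmle_mixing \<sigma> n \<omega> \<nu>" and "0 \<le> u" and "\<forall>i<n. norm (\<omega> i) \<le> B + u"
    and "hellinger (emp_mix_dens \<sigma> \<theta> n) (mix_dens \<sigma> \<nu>) \<le> h" and "0 \<le> h"
    and m1: "(\<integral>\<^sup>+y. ennreal (norm (y::'a) powr p * gauss_dens \<sigma> y) \<partial>lborel) \<le> ennreal m1" "0 \<le> m1"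
    and m2: "(\<integral>\<^sup>+y. ennreal (norm (y::'a) powr p * gauss_dens (2 * \<sigma>) y) \<partial>lborel) \<le> ennreal m2" "0 \<le> m2"
  shows "(\<integral>\<^sup>+x. ennreal (norm x powr p) \<partial>\<nu>)
    \<le> ennreal (2 powr p * sqrt (4 * 2 powr p) * u powr p * h
      + (4 * (2 powr p * (m1 + B powr p)) + 2 * 2 powr real DIM('a) * m2 + 2 powr p * B powr p))"
proof -
  have "integrable lborel (emp_mix_dens \<sigma> \<theta> n)"
    using assms(1,3) by (rule integrable_emp_mix_dens)
  moreover have "(\<integral>\<^sup>+y. ennreal (norm y powr p * emp_mix_dens \<sigma> \<theta> n y) \<partial>lborel)
      \<le> ennreal (2 powr p * (m1 + B powr p))"
    using assms(1-3,5,4) m1 by (rule nn_integral_emp_mix_dens_moment_le)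
  ultimately have "(\<integral>\<^sup>+x. ennreal (norm x powr p) \<partial>\<nu>)
      \<le> ennreal (4 * (2 powr p * (m1 + B powr p)) + 2 * 2 powr real DIM('a) * m2
        + (B + u) powr p * min 1 (4 * 2 powr p * h\<^sup>2))"
    using assms m1 m2 by (intro npmle_mixing_moment_le) auto
  also have "\<dots> \<le> ennreal (2 powr p * sqrt (4 * 2 powr p) * u powr p * h
      + (4 * (2 powr p * (m1 + B powr p)) + 2 * 2 powr real DIM('a) * m2 + 2 powr p * B powr p))"
    using powr_add_mult_min_one_le[of B u p "4 * 2 powr p" h] assms by (intro ennreal_leI) simp
  finally show ?thesis .
qed

section \<open>Probability bounds\<close>

lemma tail_radius_exp_le:
  fixes \<sigma> :: real and d n :: nat
  assumes "\<sigma> > 0" and "n \<ge> 2"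
  shows "2 powr (real d / 2) * exp (- (2 * \<sigma> * sqrt ((real d / 2 + 2) * ln n))\<^sup>2 / (4 * \<sigma>\<^sup>2))
    \<le> 1 / (real n)\<^sup>2"
proof -
  have "- (2 * \<sigma> * sqrt ((real d / 2 + 2) * ln n))\<^sup>2 / (4 * \<sigma>\<^sup>2) = - ((real d / 2 + 2) * ln n)"
    using assms by (simp add: power_mult_distrib)
  moreover have "exp (- ((real d / 2 + 2) * ln n)) = real n powr (- (real d / 2 + 2))"
    using assms(2) by (simp add: powr_def algebra_simps)
  ultimately have "exp (- (2 * \<sigma> * sqrt ((real d / 2 + 2) * ln n))\<^sup>2 / (4 * \<sigma>\<^sup>2)) = real n powr (- (real d / 2 + 2))"
    by simp
  moreover have "2 powr (real d / 2) \<le> real n powr (real d / 2)"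
    using assms(2) by (intro powr_mono2) auto
  ultimately have "2 powr (real d / 2) * exp (- (2 * \<sigma> * sqrt ((real d / 2 + 2) * ln n))\<^sup>2 / (4 * \<sigma>\<^sup>2))
      \<le> real n powr (real d / 2) * real n powr (- (real d / 2 + 2))"
    by (simp add: mult_right_mono)
  also have "\<dots> = 1 / (real n)\<^sup>2"
    using assms(2) by (simp add: powr_add[symmetric] powr_minus_divide powr_realpow)
  finally show ?thesis .
qed

lemma tail_radius_powr:
  fixes \<sigma> p :: real and d n :: nat
  assumes "\<sigma> > 0" and "n \<ge> 1"
  shows "(2 * \<sigma> * sqrt ((real d / 2 + 2) * ln n)) powr p
    = (2 * \<sigma> * sqrt (real d / 2 + 2)) powr p * ln n powr (p / 2)"
proof -
  have "0 \<le> ln (real n)"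
    using assms(2) by simp
  then have "sqrt (ln (real n)) powr p = ln n powr (p / 2)"
    by (simp add: powr_half_sqrt[symmetric] powr_powr)
  then show ?thesis
    using assms(1) \<open>0 \<le> ln (real n)\<close> by (simp add: real_sqrt_mult powr_mult)
qed

lemma prob_space_emp_mix_density:
  fixes \<theta> :: "nat \<Rightarrow> 'a::euclidean_space"
  assumes "\<sigma> > 0" and "n \<ge> 1"
  shows "prob_space (density lborel (\<lambda>y. ennreal (emp_mix_dens \<sigma> \<theta> n y)))"
  using assms by (intro prob_spaceI) (simp add: emeasure_density nn_integral_emp_mix_dens)

lemma measure_PiM_exists_component_le:
  assumes "prob_space D" and "S \<in> sets D"
  shows "measure (PiM {..<n} (\<lambda>_. D)) {\<omega> \<in> space (PiM {..<n} (\<lambda>_. D)). \<exists>i<n. \<omega> i \<in> S}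
    \<le> real n * measure D S"
proof -
  interpret D: prob_space D
    by (rule assms(1))
  interpret product_prob_space "\<lambda>_. D" "{..<n}"
    by unfold_locales
  let ?P = "PiM {..<n} (\<lambda>_. D)"
  have "{\<omega> \<in> space ?P. \<exists>i<n. \<omega> i \<in> S} = (\<Union>i<n. {\<omega> \<in> space ?P. \<omega> i \<in> S})"
    by auto
  then have "measure ?P {\<omega> \<in> space ?P. \<exists>i<n. \<omega> i \<in> S} \<le> (\<Sum>i<n. measure ?P {\<omega> \<in> space ?P. \<omega> i \<in> S})"
    using assms(2) by (simp add: P.finite_measure_subadditive_finite image_subset_iff)
  also have "\<dots> = (\<Sum>i<n. measure D S)"
    using assms(2) by (intro sum.cong refl) (simp add: measure_def emeasure_PiM_Collect_single)
  finally show ?thesis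
    by simp
qed

lemma measure_sample_space_far_le:
  fixes \<theta> :: "nat \<Rightarrow> 'a::euclidean_space"
  assumes "\<sigma> > 0" and "n \<ge> 1" and "\<forall>i<n. norm (\<theta> i) \<le> B" and "0 \<le> u"
  shows "measure (sample_space \<sigma> \<theta> n) {\<omega> \<in> space (sample_space \<sigma> \<theta> n). \<exists>i<n. B + u < norm (\<omega> i)}
    \<le> real n * (2 powr (real DIM('a) / 2) * exp (- u\<^sup>2 / (4 * \<sigma>\<^sup>2)))"
proof -
  define D where "D = density lborel (\<lambda>y. ennreal (emp_mix_dens \<sigma> \<theta> n y))"
  define S where "S = {y::'a. B + u < norm y}"
  have S_sets: "S \<in> sets D"
    unfolding S_def D_def by measurable
  interpret D: prob_space D
    unfolding D_def using assms(1,2) by (rule prob_space_emp_mix_density)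
  have "emeasure D S = (\<integral>\<^sup>+y. ennreal (emp_mix_dens \<sigma> \<theta> n y) * indicator S y \<partial>lborel)"
    unfolding D_def using S_sets by (simp add: D_def emeasure_density)
  also have "\<dots> \<le> ennreal (2 powr (real DIM('a) / 2) * exp (- u\<^sup>2 / (4 * \<sigma>\<^sup>2)))"
    unfolding S_def using assms by (rule nn_integral_emp_mix_dens_tail)
  finally have "measure D S \<le> 2 powr (real DIM('a) / 2) * exp (- u\<^sup>2 / (4 * \<sigma>\<^sup>2))"
    by (simp add: D.emeasure_eq_measure ennreal_le_iff)
  moreover have "measure (sample_space \<sigma> \<theta> n) {\<omega> \<in> space (sample_space \<sigma> \<theta> n). \<exists>i<n. \<omega> i \<in> S}
      \<le> real n * measure D S"
    unfolding sample_space_def D_def[symmetric] using D.prob_space_axioms S_sets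
    by (rule measure_PiM_exists_component_le)
  ultimately have "measure (sample_space \<sigma> \<theta> n) {\<omega> \<in> space (sample_space \<sigma> \<theta> n). \<exists>i<n. \<omega> i \<in> S}
      \<le> real n * (2 powr (real DIM('a) / 2) * exp (- u\<^sup>2 / (4 * \<sigma>\<^sup>2)))"
    by (meson mult_left_mono of_nat_0_le_iff order_trans)
  then show ?thesis
    by (simp add: S_def)
qed

lemma cond_prob_ge_of_exceptional_set:
  assumes "prob_space P" and "E \<in> sets P" and "A \<in> sets P" and "N \<in> sets P"
    and "E - A \<subseteq> N" and "measure P N \<le> \<epsilon>" and "0 < measure P E"
  shows "1 - \<epsilon> / measure P E \<le> measure P (A \<inter> E) / measure P E"
proof -
  interpret prob_space P
    by (rule assms(1))
  have "measure P E - measure P (A \<inter> E) = measure P (E - A)"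
    using assms(2,3) by (simp add: finite_measure_Diff' Int_commute Diff_Int2)
  also have "\<dots> \<le> \<epsilon>"
    using assms(4-6) by (meson finite_measure_mono order_trans)
  finally have "measure P E - \<epsilon> \<le> measure P (A \<inter> E)"
    by simp
  then have "(measure P E - \<epsilon>) / measure P E \<le> measure P (A \<inter> E) / measure P E"
    using assms(7) by (intro divide_right_mono) auto
  then show ?thesis
    using assms(7) by (simp add: diff_divide_distrib)
qed

lemma npmle_moment_cond_prob_ge:
  fixes \<sigma> p h B m1 m2 :: real and n :: nat
    and \<theta> :: "nat \<Rightarrow> 'a::euclidean_space" and \<nu>hat :: "(nat \<Rightarrow> 'a) \<Rightarrow> 'a measure"
  defines "P \<equiv> sample_space \<sigma> \<theta> n"
    and "C1 \<equiv> 2 powr p * sqrt (4 * 2 powr p) * (2 * \<sigma> * sqrt (real DIM('a) / 2 + 2)) powr p"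
    and "C2 \<equiv> 4 * (2 powr p * (m1 + B powr p)) + 2 * 2 powr real DIM('a) * m2 + 2 powr p * B powr p"
  defines "E \<equiv> {\<omega> \<in> space P. hellinger (emp_mix_dens \<sigma> \<theta> n) (mix_dens \<sigma> (\<nu>hat \<omega>)) \<le> h}"
    and "A \<equiv> {\<omega> \<in> space P. (\<integral>\<^sup>+x. ennreal (norm x powr p) \<partial>\<nu>hat \<omega>)
      \<le> ennreal (C1 * ln (real n) powr (p / 2) * h + C2)}"
  assumes "\<sigma> > 0" and "p \<ge> 0" and "n \<ge> 1" and "0 \<le> h" and "0 \<le> B" and "\<forall>i<n. norm (\<theta> i) \<le> B"
    and "\<forall>\<omega>\<in>space P. npmle_mixing \<sigma> n \<omega> (\<nu>hat \<omega>)"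
    and "(\<integral>\<^sup>+y. ennreal (norm (y::'a) powr p * gauss_dens \<sigma> y) \<partial>lborel) \<le> ennreal m1" "0 \<le> m1"
    and "(\<integral>\<^sup>+y. ennreal (norm (y::'a) powr p * gauss_dens (2 * \<sigma>) y) \<partial>lborel) \<le> ennreal m2" "0 \<le> m2"
    and "E \<in> sets P" and "A \<in> sets P" and "0 < measure P E"
  shows "1 - 1 / (real n * measure P E) \<le> measure P (A \<inter> E) / measure P E"
proof -
  \<comment> \<open>the radius at which \<open>n\<close> times the Gaussian tail bound drops to \<open>1/n\<close>\<close>
  define u where "u = 2 * \<sigma> * sqrt ((real DIM('a) / 2 + 2) * ln n)"
  define N where "N = {\<omega> \<in> space P. \<exists>i<n. B + u < norm (\<omega> i)}"
  have "0 \<le> u"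
    unfolding u_def using \<open>\<sigma> > 0\<close> \<open>n \<ge> 1\<close> by simp
  interpret P: prob_space P
    unfolding P_def sample_space_def using \<open>\<sigma> > 0\<close> \<open>n \<ge> 1\<close>
    by (intro prob_space_PiM prob_space_emp_mix_density)
  have "N \<in> sets P"
    unfolding N_def P_def sample_space_def by measurable
  have "E - A \<subseteq> N"
  proof
    fix \<omega> assume \<omega>: "\<omega> \<in> E - A"
    show "\<omega> \<in> N"
    proof (rule ccontr)
      assume "\<omega> \<notin> N"
      then have "\<forall>i<n. norm (\<omega> i) \<le> B + u"
        using \<omega> unfolding N_def E_def by force
      then have "(\<integral>\<^sup>+x. ennreal (norm x powr p) \<partial>\<nu>hat \<omega>)
          \<le> ennreal (2 powr p * sqrt (4 * 2 powr p) * u powr p * h + C2)"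
        unfolding C2_def using assms(6-) \<open>0 \<le> u\<close> \<omega>
        by (intro npmle_moment_le_of_sample_near_centers) (auto simp: E_def)
      also have "2 powr p * sqrt (4 * 2 powr p) * u powr p * h = C1 * ln (real n) powr (p / 2) * h"
        unfolding u_def C1_def using \<open>\<sigma> > 0\<close> \<open>n \<ge> 1\<close> by (simp add: tail_radius_powr)
      finally show False
        using \<omega> unfolding A_def E_def by blast
    qed
  qed
  have "measure P N \<le> 1 / real n"
  proof (cases "n = 1")
    case False
    then have "measure P N \<le> real n * (2 powr (real DIM('a) / 2) * exp (- u\<^sup>2 / (4 * \<sigma>\<^sup>2)))"
      unfolding P_def N_def using assms(6-) \<open>0 \<le> u\<close> by (intro measure_sample_space_far_le) auto
    also have "\<dots> \<le> real n * (1 / (real n)\<^sup>2)"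
      unfolding u_def using \<open>\<sigma> > 0\<close> \<open>n \<ge> 1\<close> False by (intro mult_left_mono tail_radius_exp_le) auto
    also have "\<dots> = 1 / real n"
      by (simp add: power2_eq_square)
    finally show ?thesis .
  qed simp
  then show ?thesis
    using P.prob_space_axioms \<open>E \<in> sets P\<close> \<open>A \<in> sets P\<close> \<open>N \<in> sets P\<close> \<open>E - A \<subseteq> N\<close> \<open>0 < measure P E\<close>
    by (subst divide_divide_eq_left[symmetric]) (rule cond_prob_ge_of_exceptional_set)
qed

theorem lemma2:
  fixes \<sigma> s :: real
  assumes "\<sigma> > 0" and "s \<ge> 1"
  shows "\<exists>C1>0. \<forall>B>0. \<exists>C2>0.
    \<forall>(n::nat) (\<theta>::nat \<Rightarrow> 'a::euclidean_space) (h::real) (\<nu>hat::(nat \<Rightarrow> 'a) \<Rightarrow> 'a measure).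
      let P = sample_space \<sigma> \<theta> n;
          E = {\<omega> \<in> space P. hellinger (emp_mix_dens \<sigma> \<theta> n) (mix_dens \<sigma> (\<nu>hat \<omega>)) \<le> h};
          A = {\<omega> \<in> space P. (\<integral>\<^sup>+ x. ennreal (norm x powr s) \<partial>(\<nu>hat \<omega>))
                   \<le> ennreal (C1 * ln (real n) powr (s / 2) * h + C2)}
      in n \<ge> 1 \<longrightarrow> h > 0 \<longrightarrow> (\<forall>i<n. norm (\<theta> i) \<le> B) \<longrightarrow>
         (\<forall>\<omega>\<in>space P. npmle_mixing \<sigma> n \<omega> (\<nu>hat \<omega>)) \<longrightarrow>
         E \<in> sets P \<longrightarrow> A \<in> sets P \<longrightarrow> measure P E > 0 \<longrightarrow>
         measure P (A \<inter> E) / measure P E \<ge> 1 - 1 / (real n * measure P E)"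
proof -
  have "0 \<le> s"
    using assms(2) by simp
  obtain m1 where m1: "(\<integral>\<^sup>+y. ennreal (norm (y::'a) powr s * gauss_dens \<sigma> y) \<partial>lborel) = ennreal m1" "0 \<le> m1"
    using nn_integral_gauss_dens_moment_finite[OF assms(1) \<open>0 \<le> s\<close>, where 'a = 'a]
    by (cases rule: ennreal_cases) auto
  obtain m2 where m2: "(\<integral>\<^sup>+y. ennreal (norm (y::'a) powr s * gauss_dens (2 * \<sigma>) y) \<partial>lborel) = ennreal m2" "0 \<le> m2"
    using nn_integral_gauss_dens_moment_finite[of "2 * \<sigma>" s, where 'a = 'a] assms(1) \<open>0 \<le> s\<close>
    by (cases rule: ennreal_cases) auto
  define C1 where "C1 = 2 powr s * sqrt (4 * 2 powr s) * (2 * \<sigma> * sqrt (real DIM('a) / 2 + 2)) powr s"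
  define C2 where "C2 B = 4 * (2 powr s * (m1 + B powr s)) + 2 * 2 powr real DIM('a) * m2 + 2 powr s * B powr s"
    for B
  have "0 < C1"
    unfolding C1_def using assms(1) by simp
  have C2_pos: "0 < C2 B" if "0 < B" for B
    unfolding C2_def using that m1(2) m2(2) by (intro add_nonneg_pos) auto
  show ?thesis
    unfolding Let_def
    apply (rule exI[of _ C1], intro conjI allI impI \<open>0 < C1\<close>)
    subgoal for B
      apply (rule exI[of _ "C2 B"], intro conjI allI impI)
       apply (rule C2_pos, assumption)
      unfolding C1_def C2_def
      apply (rule npmle_moment_cond_prob_ge[OF assms(1) \<open>0 \<le> s\<close> _ _ _ _ _
            m1(1)[THEN eq_refl] m1(2) m2(1)[THEN eq_refl] m2(2)])
      apply (assumption | erule less_imp_le)+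
      done
    done
qed

end
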